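(* Let $R$ be a commutative ring with identity satisfying Property $D$. Then the trivial extension $R[x]\propto R[[x]]$ satisfies Property $D$.
   Context: $R[[x]]$ is regarded as an $R[x]$-module via multiplication. For a ring $A$ and an $A$-module $M$, $A\propto M$ is $A\times M$ with coordinatewise addition and $(a,m)(b,n)=(ab,an+bm)$. A ring $A$ satisfies Property $D$ if $A\setminus\mathfrak{N}(A)=\mathrm{reg}(A)$, where $\mathfrak{N}(A)$ is the nilradical and $\mathrm{reg}(A)$ the set of regular elements. *)

theory Defs
  imports "HOL-Computational_Algebra.Polynomial_FPS"
begin

definition nilradical :: "'a::comm_ring_1 set" where
  "nilradical = {a. \<exists>n. a ^ n = 0}"

definition regular_elems :: "'a::comm_ring_1 set" where
  "regular_elems = {a. \<forall>b. a * b = 0 \<longrightarrow> b = 0}"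

definition propertyD :: "'a::comm_ring_1 itself \<Rightarrow> bool" where
  "propertyD _ \<longleftrightarrow> (UNIV - (nilradical :: 'a set)) = regular_elems"

text \<open>The trivial extension R[x] \<propto> R[[x]], where R[[x]] is an R[x]-module
  via multiplication (a polynomial acts through its embedding into R[[x]]).\<close>

declare [[typedef_overloaded]]
datatype ('a::zero) triv_ext = TE "'a poly" "'a fps"

instantiation triv_ext :: (comm_ring_1) comm_ring_1
begin


definition "0 = TE 0 0"
definition "1 = TE 1 0"
fun plus_triv_ext where "TE a m + TE b n = TE (a + b) (m + n)"
fun minus_triv_ext where "TE a m - TE b n = TE (a - b) (m - n)"
fun uminus_triv_ext where "- TE a m = TE (- a) (- m)"
fun times_triv_ext where
  "TE a m * TE b n = TE (a * b) (fps_of_poly a * n + fps_of_poly b * m)"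

instance
proof
  fix x y z :: "'a triv_ext"
  show "x * y * z = x * (y * z)"
    by (cases x; cases y; cases z) (simp add: fps_of_poly_mult algebra_simps)
  show "x * y = y * x"
    by (cases x; cases y) (simp add: algebra_simps)
  show "1 * x = x"
    by (cases x) (simp add: one_triv_ext_def)
  show "(x + y) * z = x * z + y * z"
    by (cases x; cases y; cases z) (simp add: fps_of_poly_add algebra_simps)
  show "x + y + z = x + (y + z)"
    by (cases x; cases y; cases z) simp
  show "x + y = y + x"
    by (cases x; cases y) (simp add: add.commute)
  show "0 + x = x"
    by (cases x) (simp add: zero_triv_ext_def)
  show "- x + x = 0"
    by (cases x) (simp add: zero_triv_ext_def)
  show "x - y = x + - y"
    by (cases x; cases y) simp
  show "(0::'a triv_ext) \<noteq> 1"
    by (simp add: zero_triv_ext_def one_triv_ext_def)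
qed

end

end

theory Submission
  imports Defs
begin

text \<open>Write \<open>z = (a, m)\<close> with \<open>a \<in> R[x]\<close>. If \<open>a\<close> is nilpotent then so is \<open>z\<close>, so a
  non-nilpotent \<open>z\<close> has a non-nilpotent polynomial part \<open>a\<close>. Let \<open>a\<^sub>i\<close> be its first
  non-nilpotent coefficient; by Property D for \<open>R\<close> it is regular. Then \<open>a = N + x\<^sup>i g\<close>
  with \<open>N\<close> nilpotent and \<open>g\<close> of regular constant term, so \<open>a\<close> is regular already in
  \<open>R[[x]]\<close>: a regular \<open>r\<close> plus a nilpotent \<open>u\<close> stays regular, because \<open>r + u\<close>
  divides \<open>r\<^sup>k\<close> once \<open>u\<^sup>k = 0\<close>. Finally \<open>(a, m)(b, n) = (ab, an + bm) = 0\<close> gives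
  first \<open>b = 0\<close> and then \<open>n = 0\<close> by regularity of \<open>a\<close> in \<open>R[[x]]\<close>.\<close>

unbundle fps_syntax

lemma nilradical_add:
  fixes x y :: "'a::comm_ring_1"
  assumes "x \<in> nilradical" "y \<in> nilradical"
  shows "x + y \<in> nilradical"
proof -
  obtain n m where n: "x ^ n = 0" and m: "y ^ m = 0"
    using assms by (auto simp: nilradical_def)
  have "of_nat ((n + m) choose k) * x ^ k * y ^ (n + m - k) = 0" for k
  proof (cases "n \<le> k")
    case True
    then have "k = n + (k - n)" by simp
    then have "x ^ k = 0" by (metis power_add n mult_zero_left)
    then show ?thesis by simp
  next
    case False
    then have "n + m - k = m + (n - k)" by simp
    then have "y ^ (n + m - k) = 0" by (metis power_add m mult_zero_left)
    then show ?thesis by simp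
  qed
  then have "(x + y) ^ (n + m) = 0" by (simp add: binomial_ring)
  then show ?thesis by (auto simp: nilradical_def)
qed

lemma nilradical_mult_right:
  fixes x y :: "'a::comm_ring_1"
  assumes "x \<in> nilradical"
  shows "x * y \<in> nilradical"
proof -
  obtain n where "x ^ n = 0" using assms by (auto simp: nilradical_def)
  then have "(x * y) ^ n = 0" by (simp add: power_mult_distrib)
  then show ?thesis by (auto simp: nilradical_def)
qed

lemma regular_elemsI:
  fixes x :: "'a::comm_ring_1"
  assumes "\<And>b. x * b = 0 \<Longrightarrow> b = 0"
  shows "x \<in> regular_elems"
  using assms by (simp add: regular_elems_def)

lemma regular_elemsD:
  fixes x :: "'a::comm_ring_1"
  assumes "x \<in> regular_elems" "x * b = 0"
  shows "b = 0"
  using assms unfolding regular_elems_def by blast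

lemma regular_elems_mult:
  fixes x y :: "'a::comm_ring_1"
  assumes "x \<in> regular_elems" "y \<in> regular_elems"
  shows "x * y \<in> regular_elems"
proof (rule regular_elemsI)
  fix b assume "x * y * b = 0"
  then have "y * b = 0" using assms(1) by (metis mult.assoc regular_elemsD)
  then show "b = 0" by (rule regular_elemsD[OF assms(2)])
qed

lemma regular_elems_power:
  fixes x :: "'a::comm_ring_1"
  assumes "x \<in> regular_elems"
  shows "x ^ n \<in> regular_elems"
proof (induction n)
  case 0
  show ?case by (rule regular_elemsI) simp
next
  case (Suc n)
  then show ?case using regular_elems_mult[OF assms] by simp
qed

lemma regular_elems_dvd:
  fixes x y :: "'a::comm_ring_1"
  assumes "x dvd y" "y \<in> regular_elems"
  shows "x \<in> regular_elems"
proof (rule regular_elemsI)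
  fix b assume "x * b = 0"
  obtain c where "y = x * c" using assms(1) by blast
  then have "y * b = c * (x * b)" by (simp add: ac_simps)
  then have "y * b = 0" using \<open>x * b = 0\<close> by simp
  then show "b = 0" by (rule regular_elemsD[OF assms(2)])
qed

lemma regular_elems_not_nilradical:
  fixes x :: "'a::comm_ring_1"
  assumes "x \<in> regular_elems"
  shows "x \<notin> nilradical"
proof
  assume "x \<in> nilradical"
  then obtain n where "x ^ n = 0" by (auto simp: nilradical_def)
  then have "x ^ n * 1 = 0" by simp
  with regular_elems_power[OF assms] show False by (metis regular_elemsD zero_neq_one)
qed

lemma regular_elems_add_nilradical:
  fixes r n :: "'a::comm_ring_1"
  assumes r: "r \<in> regular_elems" and n: "n \<in> nilradical"
  shows "r + n \<in> regular_elems"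
proof -
  obtain k where k: "n ^ k = 0" using n by (auto simp: nilradical_def)
  have "r ^ k - (- n) ^ k = (r - - n) * (\<Sum>i<k. (- n) ^ (k - Suc i) * r ^ i)"
    by (rule power_diff_sumr2)
  then have "r + n dvd r ^ k - (- n) ^ k" by (metis diff_minus_eq_add dvd_triv_left)
  moreover have "(- n) ^ k = 0" using k by (metis power_minus mult_zero_right)
  ultimately have "r + n dvd r ^ k" by simp
  then show ?thesis using regular_elems_power[OF r] by (rule regular_elems_dvd)
qed

lemma propertyD_iff:
  "propertyD TYPE('a::comm_ring_1) \<longleftrightarrow> (\<forall>x::'a. x \<notin> nilradical \<longrightarrow> x \<in> regular_elems)"
  unfolding propertyD_def using regular_elems_not_nilradical by blast

lemma poly_in_nilradicalI:
  fixes p :: "'a::comm_ring_1 poly"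
  assumes "\<And>i. coeff p i \<in> nilradical"
  shows "p \<in> nilradical"
  using assms
proof (induction p rule: pCons_induct)
  case 0
  then show ?case by (auto simp: nilradical_def intro: exI[of _ 1])
next
  case (pCons a p)
  have "a \<in> nilradical" using pCons.prems[of 0] by simp
  have "p \<in> nilradical" using pCons.IH pCons.prems[of "Suc _"] by simp
  have "[:a:] \<in> nilradical"
    using \<open>a \<in> nilradical\<close> by (auto simp: nilradical_def poly_const_pow)
  moreover have "p * [:0, 1:] \<in> nilradical"
    using \<open>p \<in> nilradical\<close> by (rule nilradical_mult_right)
  moreover have "pCons a p = [:a:] + p * [:0, 1:]" by simp
  ultimately show ?case by (metis nilradical_add)
qed

lemma fps_const_in_nilradical:
  fixes c :: "'a::comm_ring_1"
  assumes "c \<in> nilradical"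
  shows "fps_const c \<in> nilradical"
  using assms by (auto simp: nilradical_def fps_const_power simp flip: fps_const_0_eq_0)

lemma fps_X_in_regular_elems: "(fps_X :: 'a::comm_ring_1 fps) \<in> regular_elems"
proof (rule regular_elemsI)
  fix h :: "'a fps"
  assume "fps_X * h = 0"
  have "h = fps_shift 1 (h * fps_X)" by (rule fps_shift_times_fps_X'[symmetric])
  also have "h * fps_X = 0" using \<open>fps_X * h = 0\<close> by (simp add: mult.commute)
  finally show "h = 0" by simp
qed

lemma fps_in_regular_elems_if_nth_0:
  fixes f :: "'a::comm_ring_1 fps"
  assumes "f $ 0 \<in> regular_elems"
  shows "f \<in> regular_elems"
proof (rule regular_elemsI)
  fix g assume "f * g = 0"
  then have "f $ 0 * g $ subdegree g = 0"
    using nth_subdegree_mult_right[of f g] by simp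
  then have "g $ subdegree g = 0" by (rule regular_elemsD[OF assms])
  then show "g = 0" by simp
qed

lemma fps_in_regular_elems_if_first_non_nilpotent_nth:
  fixes f :: "'a::comm_ring_1 fps"
  assumes "\<And>j. j < i \<Longrightarrow> f $ j \<in> nilradical" and "f $ i \<in> regular_elems"
  shows "f \<in> regular_elems"
  using assms
proof (induction i arbitrary: f)
  case 0
  then show ?case by (simp add: fps_in_regular_elems_if_nth_0)
next
  case (Suc i)
  define g where "g = fps_shift 1 f"
  have "g \<in> regular_elems" using Suc.IH[of g] Suc.prems by (simp add: g_def)
  then have "fps_X * g \<in> regular_elems" by (intro regular_elems_mult fps_X_in_regular_elems)
  moreover have "fps_const (f $ 0) \<in> nilradical"
    using Suc.prems(1)[of 0] by (simp add: fps_const_in_nilradical)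
  moreover have "f = fps_X * g + fps_const (f $ 0)"
    by (simp add: fps_eq_iff g_def fps_X_mult_nth)
  ultimately show ?case by (metis regular_elems_add_nilradical)
qed

lemma fps_of_poly_in_regular_elems:
  fixes p :: "'a::comm_ring_1 poly"
  assumes D: "propertyD TYPE('a)" and p: "p \<notin> nilradical"
  shows "fps_of_poly p \<in> regular_elems"
proof -
  have "\<exists>i. coeff p i \<notin> nilradical" using p poly_in_nilradicalI by blast
  then obtain i where i: "coeff p i \<notin> nilradical"
    and below: "\<And>j. j < i \<Longrightarrow> coeff p j \<in> nilradical"
    using exists_least_iff[of "\<lambda>i. coeff p i \<notin> nilradical"] by blast
  have "coeff p i \<in> regular_elems" using D i by (simp add: propertyD_iff)
  with below show ?thesis
    by (intro fps_in_regular_elems_if_first_non_nilpotent_nth[of i]) simp_all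
qed

lemma TE_in_nilradical:
  fixes a :: "'a::comm_ring_1 poly"
  assumes "a \<in> nilradical"
  shows "TE a m \<in> nilradical"
proof -
  have "TE a 0 ^ n = TE (a ^ n) 0" for n
    by (induction n) (simp_all add: one_triv_ext_def)
  then have "TE a 0 \<in> nilradical"
    using assms by (auto simp: nilradical_def zero_triv_ext_def)
  moreover have "TE 0 m \<in> nilradical"
    by (auto simp: nilradical_def power2_eq_square zero_triv_ext_def intro: exI[of _ 2])
  moreover have "TE a m = TE a 0 + TE 0 m" by simp
  ultimately show ?thesis by (metis nilradical_add)
qed

lemma TE_in_regular_elems:
  fixes a :: "'a::comm_ring_1 poly"
  assumes a: "fps_of_poly a \<in> regular_elems"
  shows "TE a m \<in> regular_elems"
proof (rule regular_elemsI)
  fix w assume "TE a m * w = 0"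
  moreover obtain b n where w: "w = TE b n" by (cases w)
  ultimately have ab: "a * b = 0" and abnm: "fps_of_poly a * n + fps_of_poly b * m = 0"
    by (simp_all add: zero_triv_ext_def)
  have "fps_of_poly a * fps_of_poly b = 0" using ab by (simp flip: fps_of_poly_mult)
  then have "fps_of_poly b = 0" by (rule regular_elemsD[OF a])
  then have "b = 0" using fps_of_poly_eq_iff[of b 0] by simp
  then have "fps_of_poly a * n = 0" using abnm by simp
  then have "n = 0" by (rule regular_elemsD[OF a])
  then show "w = 0" using w \<open>b = 0\<close> by (simp add: zero_triv_ext_def)
qed

theorem mainTheorem15:
  assumes "propertyD TYPE('a::comm_ring_1)"
  shows "propertyD TYPE('a triv_ext)"
  unfolding propertyD_iff
proof (intro allI impI)
  fix z :: "'a triv_ext"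
  assume z: "z \<notin> nilradical"
  obtain a m where z_eq: "z = TE a m" by (cases z)
  then have "a \<notin> nilradical" using z TE_in_nilradical by blast
  then have "fps_of_poly a \<in> regular_elems"
    by (rule fps_of_poly_in_regular_elems[OF assms])
  then show "z \<in> regular_elems" unfolding z_eq by (rule TE_in_regular_elems)
qed

end
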